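(* In the supercuspidal setting below, let $p$ be odd, $L/\mathbb Q_p$ unramified, $k=c_0\ge2$, and assume $k\ge10$ or $p\ge10$. Let $\psi_0$ be the trivial character modulo $p^k$ and suppose $p\mid a_1a_2a_3$. Then $\widehat H(\psi_0,a_1,a_2,a_3)=0$ unless $p^k\mid a_1a_2a_3$, in which case $$\widehat H(\psi_0,a_1,a_2,a_3)=\overline\gamma\,p^{-2k}\,\tau_L(\xi)\,S(a_1,0;p^k)S(a_2,0;p^k)S(a_3,0;p^k),$$ where $\tau_L(\xi)=\sum_{t\in(\mathcal O_L/p^k\mathcal O_L)^\times}\xi(t)e_{p^k}(-\mathrm{Tr}(t))$ and $S(a,0;p^k)=\sum^*_{x\bmod p^k}e_{p^k}(ax)$.
   Context: Supercuspidal setting: $p$ is a prime, $L/\mathbb Q_p$ a quadratic extension with ring of integers $\mathcal O_L$, ramification index $e\in\{1,2\}$, $d=v_p(\mathrm{disc}(L/\mathbb Q_p))$; $\eta_L$ is the nontrivial quadratic character of $\mathbb Q_p^\times$ trivial on $\mathrm{Nm}(L^\times)$. $\xi$ is a character of $L^\times$ with $\xi\neq\xi\circ(\text{Galois conjugation})$ and $\xi|_{\mathbb Q_p^\times}=\eta_L$, with $(L/\mathbb Q_p,\xi)$ an admissible pair (corresponding to a trivial central character dihedral supercuspidal representation of $\mathrm{PGL}_2(\mathbb Q_p)$). $c(\xi)$ is its conductor exponent and $c_0=c(\xi)/e$. Set $\kappa=c_0$ if $L$ unramified, $\kappa=c_0+1$ if $L$ ramified. Let $\gamma$ be a fixed complex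 number of modulus $1$ depending only on $L$. For integers $m,n$ and $k\ge1$, $$H(m,n;p^k)=\overline\gamma\,p^{-d/2}\sum_{\substack{t\in(\mathcal O_L/p^k\mathcal O_L)^\times\\ \mathrm{Nm}(t)\equiv mn\ (p^k)}}\xi(t)\,e_{p^k}(-\mathrm{Tr}(t))$$ if $k\ge\kappa$ and $p\nmid mn$, and $H(m,n;p^k)=0$ otherwise. For a Dirichlet character $\psi$ mod $p^k$ and integers $a_1,a_2,a_3$, $$\widehat H(\psi,a_1,a_2,a_3)=p^{-2k}\sum_{u,x_1,x_2,x_3\bmod p^k}\overline\psi(u)H(\overline u x_1x_2x_3,1;p^k)\,e_{p^k}(a_1x_1+a_2x_2+a_3x_3-ua_1a_2a_3).$$ Here $e_q(x)=\exp(2\pi i x/q)$, $\overline u$ is the inverse mod $p^k$, and Dirichlet characters vanish on non-units. *)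

theory Defs
  imports "HOL-Number_Theory.Number_Theory" Complex_Main
begin

text \<open>Model of O_L / p^k O_L for L/Q_p unramified quadratic, p odd:
  O_L = Z_p[sqrt eps] with eps an integer quadratic non-residue mod p.
  An element x + y sqrt eps is represented by the pair (x,y) with 0 <= x,y < p^k.\<close>

definition eadd :: "int \<Rightarrow> int \<Rightarrow> complex" where
  "eadd q x = cis (2 * pi * of_int x / of_int q)"

definition mulL :: "int \<Rightarrow> int \<Rightarrow> int \<times> int \<Rightarrow> int \<times> int \<Rightarrow> int \<times> int" where
  "mulL eps q a b = ((fst a * fst b + eps * snd a * snd b) mod q,
                     (fst a * snd b + snd a * fst b) mod q)"

definition normL :: "int \<Rightarrow> int \<times> int \<Rightarrow> int" where
  "normL eps t = fst t ^ 2 - eps * snd t ^ 2"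

definition traceL :: "int \<times> int \<Rightarrow> int" where
  "traceL t = 2 * fst t"

definition conjL :: "int \<Rightarrow> int \<times> int \<Rightarrow> int \<times> int" where
  "conjL q t = (fst t, (- snd t) mod q)"

definition unitsL :: "int \<Rightarrow> int \<Rightarrow> nat \<Rightarrow> (int \<times> int) set" where
  "unitsL eps p k = {t. fst t \<in> {0..<p^k} \<and> snd t \<in> {0..<p^k} \<and> \<not> p dvd normL eps t}"

text \<open>Restriction to O_L^\<times> of a character xi of L^\<times> with xi|Q_p^\<times> = eta_L
  (eta_L unramified, so trivial on Z_p^\<times>), xi \<noteq> xi o conjugation, and conductor
  exponent exactly c(xi) = k.  (xi(p) = -1 is forced and plays no role in H.)\<close>
definition admissible_xi :: "int \<Rightarrow> int \<Rightarrow> nat \<Rightarrow> (int \<times> int \<Rightarrow> complex) \<Rightarrow> bool" where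
  "admissible_xi eps p k xi \<longleftrightarrow>
     xi (1, 0) = 1 \<and>
     (\<forall>a\<in>unitsL eps p k. \<forall>b\<in>unitsL eps p k. xi (mulL eps (p^k) a b) = xi a * xi b) \<and>
     (\<forall>x\<in>{0..<p^k}. \<not> p dvd x \<longrightarrow> xi (x, 0) = 1) \<and>
     (\<exists>t\<in>unitsL eps p k. xi (conjL (p^k) t) \<noteq> xi t) \<and>
     (\<exists>t\<in>unitsL eps p k. fst t mod p^(k-1) = 1 mod p^(k-1) \<and> snd t mod p^(k-1) = 0 \<and> xi t \<noteq> 1)"

text \<open>H(m,n;p^k); here d = 0 (unramified), kappa = c_0.\<close>
definition Hk :: "int \<Rightarrow> int \<Rightarrow> nat \<Rightarrow> nat \<Rightarrow> (int \<times> int \<Rightarrow> complex) \<Rightarrow> complex \<Rightarrow> int \<Rightarrow> int \<Rightarrow> complex" where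
  "Hk eps p c0 k xi \<gamma> m n =
     (if k \<ge> c0 \<and> \<not> p dvd (m * n) then
        cnj \<gamma> * (\<Sum>t\<in>{t\<in>unitsL eps p k. [normL eps t = m * n] (mod p^k)}.
                     xi t * eadd (p^k) (- traceL t))
      else 0)"

definition inv_mod :: "int \<Rightarrow> int \<Rightarrow> int" where
  "inv_mod q u = (SOME v. v \<in> {0..<q} \<and> [u * v = 1] (mod q))"

definition Hhat :: "int \<Rightarrow> int \<Rightarrow> nat \<Rightarrow> nat \<Rightarrow> (int \<times> int \<Rightarrow> complex) \<Rightarrow> complex
                    \<Rightarrow> (int \<Rightarrow> complex) \<Rightarrow> int \<Rightarrow> int \<Rightarrow> int \<Rightarrow> complex" where
  "Hhat eps p c0 k xi \<gamma> \<psi> a1 a2 a3 =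
     inverse (of_int (p ^ (2 * k))) *
     (\<Sum>u\<in>{0..<p^k}. \<Sum>x1\<in>{0..<p^k}. \<Sum>x2\<in>{0..<p^k}. \<Sum>x3\<in>{0..<p^k}.
        cnj (\<psi> u) * Hk eps p c0 k xi \<gamma> (inv_mod (p^k) u * x1 * x2 * x3) 1 *
        eadd (p^k) (a1 * x1 + a2 * x2 + a3 * x3 - u * a1 * a2 * a3))"

definition psi0 :: "int \<Rightarrow> nat \<Rightarrow> int \<Rightarrow> complex" where
  "psi0 p k u = (if coprime u p then 1 else 0)"

definition tauL :: "int \<Rightarrow> int \<Rightarrow> nat \<Rightarrow> (int \<times> int \<Rightarrow> complex) \<Rightarrow> complex" where
  "tauL eps p k xi = (\<Sum>t\<in>unitsL eps p k. xi t * eadd (p^k) (- traceL t))"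

definition Ram0 :: "int \<Rightarrow> nat \<Rightarrow> int \<Rightarrow> complex" where
  "Ram0 p k a = (\<Sum>x\<in>{x\<in>{0..<p^k}. coprime x p}. eadd (p^k) (a * x))"

end

theory Submission
  imports Defs
begin

(* With the trivial character the u-sum in Hhat is a Ramanujan sum in disguise.
   If p^k divides a1 a2 a3, the phase e(-u a1 a2 a3) is trivial; substituting u -> u^-1 x1 x2 x3
   turns the u-sum of H into the sum of H over all unit residues m, which is the Gauss sum
   tau_L(xi) because every unit of O_L / p^k has unit norm, and the x-sums factor into the
   Ramanujan sums S(a_i, 0; p^k).
   Otherwise, up to symmetry, either p does not divide a1 or p divides both a2 and a3.
   Substituting x1 -> u y makes the u-sum the Ramanujan sum c_{p^k}(a1 y - a1 a2 a3), which
   vanishes unless p^(k-1) divides a1 y - a1 a2 a3, and for units y both cases exclude this. *)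

lemma eadd_add: "eadd q (x + y) = eadd q x * eadd q y"
  unfolding eadd_def by (simp add: cis_mult add_divide_distrib distrib_left)

lemma eadd_mult_self: "q \<noteq> 0 \<Longrightarrow> eadd q (q * n) = 1"
  unfolding eadd_def using cis_multiple_2pi[of "of_int n"] by (simp add: mult.assoc)

lemma eadd_cong:
  assumes "[x = y] (mod q)"
  shows "eadd q x = eadd q y"
proof (cases "q = 0")
  case True
  then show ?thesis using assms by simp
next
  case False
  obtain n where "x = y + q * n"
    using assms cong_iff_lin[of y x q] cong_sym by blast
  then show ?thesis using False by (simp add: eadd_add eadd_mult_self)
qed

lemma eadd_eq_1_iff:
  assumes "q > 0"
  shows "eadd q x = 1 \<longleftrightarrow> q dvd x"
proof
  assume "eadd q x = 1"
  then have "cos (2 * pi * of_int x / of_int q) = 1"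
    unfolding eadd_def by (metis cis.sel(1) one_complex.sel(1))
  then obtain n :: int where "2 * pi * of_int x / of_int q = of_int n * 2 * pi"
    using cos_one_2pi_int by blast
  then have "real_of_int x = of_int (n * q)"
    using assms by (simp add: field_simps)
  then show "q dvd x" by (metis of_int_eq_iff dvd_triv_right)
qed (use assms in \<open>auto simp: eadd_mult_self\<close>)

lemma cong_inv_mod:
  fixes q u :: int
  assumes "q > 0" "coprime u q"
  shows "[u * inv_mod q u = 1] (mod q)"
proof -
  have "\<exists>v. v \<in> {0..<q} \<and> [u * v = 1] (mod q)"
    using assms coprime_iff_invertible'_int by auto
  then have "inv_mod q u \<in> {0..<q} \<and> [u * inv_mod q u = 1] (mod q)"
    unfolding inv_mod_def by (rule someI_ex)
  then show ?thesis ..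
qed

lemma coprime_inv_mod: "q > 0 \<Longrightarrow> coprime u q \<Longrightarrow> coprime (inv_mod q u) q"
  using cong_inv_mod coprime_iff_invertible_int by (metis mult.commute)

lemma sum_mult_unit_reindex:
  fixes q u :: int
  assumes q: "q > 0" and u: "coprime u q"
  shows "(\<Sum>x\<in>{0..<q}. f x) = (\<Sum>y\<in>{0..<q}. f ((u * y) mod q))"
proof -
  let ?v = "inv_mod q u"
  have uv: "[u * ?v = 1] (mod q)" by (rule cong_inv_mod[OF q u])
  have cancel: "[a * ((b * x) mod q) = x] (mod q)" if "[a * b = 1] (mod q)" for a b x
  proof -
    have "[a * ((b * x) mod q) = (a * b) * x] (mod q)" by (simp add: cong_def mod_simps ac_simps)
    also have "[(a * b) * x = 1 * x] (mod q)" using that by (intro cong_mult cong_refl)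
    finally show ?thesis by simp
  qed
  have right_inv: "(u * ((?v * x) mod q)) mod q = x" if "x \<in> {0..<q}" for x
    using cancel[OF uv, of x] that by (simp add: cong_def)
  have left_inv: "(?v * ((u * y) mod q)) mod q = y" if "y \<in> {0..<q}" for y
    using cancel[of ?v u y] uv that by (simp add: cong_def mult.commute)
  show ?thesis
    by (rule sum.reindex_bij_witness[where i="\<lambda>y. (u * y) mod q" and j="\<lambda>x. (?v * x) mod q"])
       (use q right_inv left_inv in auto)
qed

lemma sum_units_inv_mod_mult_reindex:
  fixes q X :: int
  assumes q: "q > 0" and X: "coprime X q"
  shows "(\<Sum>u\<in>{u\<in>{0..<q}. coprime u q}. f ((inv_mod q u * X) mod q))
       = (\<Sum>u\<in>{u\<in>{0..<q}. coprime u q}. f u)"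
proof -
  let ?\<sigma> = "\<lambda>u. (inv_mod q u * X) mod q"
  have maps: "?\<sigma> u \<in> {u\<in>{0..<q}. coprime u q}" if "coprime u q" for u
    using coprime_inv_mod[OF q that] X q by simp
  have involution: "?\<sigma> (?\<sigma> u) = u" if u: "u \<in> {0..<q}" "coprime u q" for u
  proof -
    let ?v = "inv_mod q u" and ?w = "inv_mod q (?\<sigma> u)"
    have "[?w * X * 1 = ?w * X * (u * ?v)] (mod q)"
      using cong_inv_mod[OF q u(2)] by (intro cong_mult cong_refl) (simp add: cong_sym)
    also have "?w * X * (u * ?v) = ?w * (?v * X) * u" by (simp add: ac_simps)
    also have "[?w * (?v * X) * u = ?w * ?\<sigma> u * u] (mod q)"
      by (intro cong_mult cong_refl) (simp add: cong_def)
    also have "[?w * ?\<sigma> u * u = 1 * u] (mod q)"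
      using cong_inv_mod[OF q] maps[OF u(2)]
      by (intro cong_mult cong_refl) (simp add: mult.commute)
    finally show ?thesis using u(1) by (simp add: cong_def)
  qed
  show ?thesis
    by (rule sum.reindex_bij_witness[where i="?\<sigma>" and j="?\<sigma>"]) (use maps involution in auto)
qed

lemma cnj_psi0 [simp]: "cnj (psi0 p k u) = psi0 p k u"
  by (simp add: psi0_def)

lemma psi0_mult: "psi0 p k (x * y) = psi0 p k x * psi0 p k y"
  by (simp add: psi0_def)

lemma psi0_cong: "[x = y] (mod p) \<Longrightarrow> psi0 p k x = psi0 p k y"
  unfolding psi0_def by (metis cong_def gcd_red_int coprime_iff_gcd_eq_1)

lemma Ram0_eq_sum_psi0: "Ram0 p k a = (\<Sum>x\<in>{0..<p^k}. psi0 p k x * eadd (p^k) (a * x))"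
  unfolding Ram0_def psi0_def by (subst sum.inter_filter) (auto intro: sum.cong)

lemma ramanujan_sum_prime_power_eq_0:
  fixes p m :: int
  assumes p: "prime p" and m: "\<not> p^(k-1) dvd m"
  shows "(\<Sum>u\<in>{0..<p^k}. psi0 p k u * eadd (p^k) (u * m)) = 0"
proof -
  let ?q = "p^k"
  let ?c = "\<lambda>u. psi0 p k u * eadd ?q (u * m)"
  have k: "k \<ge> 1" using m by (cases k) auto \<comment> \<open>for k = 0, p^(k-1) = 1 divides m\<close>
  have q: "?q > 0" using prime_gt_0_int[OF p] by simp
  \<comment> \<open>Shifting u by p preserves psi0 and multiplies each term by e(p m / p^k), which is not 1.\<close>
  have "p dvd ?q" using k by (simp add: dvd_power)
  then have "[(u + p) mod ?q = u] (mod p)" for u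
    by (simp add: cong_def mod_mod_cancel)
  then have shift: "?c ((u + p) mod ?q) = ?c u * eadd ?q (p * m)" for u
  proof -
    have "psi0 p k ((u + p) mod ?q) = psi0 p k u"
      by (rule psi0_cong) fact
    moreover have "eadd ?q ((u + p) mod ?q * m) = eadd ?q (u * m) * eadd ?q (p * m)"
      by (simp add: eadd_cong[of _ "(u + p) * m"] cong_def mod_mult_left_eq distrib_right eadd_add)
    ultimately show ?thesis by simp
  qed
  have "sum ?c {0..<?q} = (\<Sum>u\<in>{0..<?q}. ?c ((u + p) mod ?q))"
    by (rule sum.reindex_bij_witness[where i="\<lambda>u. (u + p) mod ?q" and j="\<lambda>u. (u - p) mod ?q"])
       (use q in \<open>auto simp: mod_simps\<close>)
  also have "\<dots> = sum ?c {0..<?q} * eadd ?q (p * m)"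
    by (simp add: shift sum_distrib_right)
  finally have "sum ?c {0..<?q} * (1 - eadd ?q (p * m)) = 0"
    by (simp add: algebra_simps)
  moreover have "\<not> ?q dvd p * m"
    using m k prime_gt_0_int[OF p] by (cases k) auto
  then have "eadd ?q (p * m) \<noteq> 1" using eadd_eq_1_iff[OF q] by blast
  ultimately show ?thesis by simp
qed

lemma Hk_eq_0_if_dvd: "p dvd m \<Longrightarrow> Hk eps p c0 k xi \<gamma> m n = 0"
  unfolding Hk_def by simp

lemma Hk_cong:
  assumes "k \<ge> 1" and "[m = m'] (mod p^k)"
  shows "Hk eps p c0 k xi \<gamma> m n = Hk eps p c0 k xi \<gamma> m' n"
proof -
  have mn: "[m * n = m' * n] (mod p^k)" using assms(2) by (rule cong_scalar_right)
  moreover have "p dvd p^k" using assms(1) by (simp add: dvd_power)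
  ultimately have "p dvd m * n \<longleftrightarrow> p dvd m' * n"
    using cong_dvd_iff cong_dvd_modulus by blast
  moreover have "[normL eps t = m * n] (mod p^k) \<longleftrightarrow> [normL eps t = m' * n] (mod p^k)" for t
    using mn by (meson cong_sym cong_trans)
  ultimately show ?thesis unfolding Hk_def by simp
qed

lemma sum_Hk_units:
  fixes p :: int
  assumes p: "prime p" and k: "k \<ge> 1" and c0: "c0 \<le> k"
  shows "(\<Sum>m\<in>{m\<in>{0..<p^k}. coprime m p}. Hk eps p c0 k xi \<gamma> m 1) = cnj \<gamma> * tauL eps p k xi"
proof -
  let ?q = "p^k" and ?U = "{m\<in>{0..<p^k}. coprime m p}"
  let ?f = "\<lambda>t. xi t * eadd ?q (- traceL t)"
  let ?fibre = "\<lambda>m. {t \<in> unitsL eps p k. normL eps t mod ?q = m}"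
  have q: "?q > 0" using prime_gt_0_int[OF p] by simp
  have "Hk eps p c0 k xi \<gamma> m 1 = cnj \<gamma> * sum ?f (?fibre m)" if m: "m \<in> ?U" for m
  proof -
    have "\<not> p dvd m" using m p coprime_common_divisor[of m p p] not_prime_unit by auto
    moreover have "{t \<in> unitsL eps p k. [normL eps t = m * 1] (mod ?q)} = ?fibre m"
      using m by (auto simp: cong_def)
    ultimately show ?thesis unfolding Hk_def using c0 by simp
  qed
  then have "(\<Sum>m\<in>?U. Hk eps p c0 k xi \<gamma> m 1) = cnj \<gamma> * (\<Sum>m\<in>?U. sum ?f (?fibre m))"
    by (simp add: sum_distrib_left)
  also have "(\<Sum>m\<in>?U. sum ?f (?fibre m)) = sum ?f (unitsL eps p k)"
  proof (rule sum.group)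
    show "finite (unitsL eps p k)"
      by (rule finite_subset[of _ "{0..<?q} \<times> {0..<?q}"]) (auto simp: unitsL_def)
    show "(\<lambda>t. normL eps t mod ?q) ` unitsL eps p k \<subseteq> ?U"
    proof safe
      fix t assume "t \<in> unitsL eps p k"
      then have "\<not> p dvd normL eps t" by (simp add: unitsL_def)
      then have "coprime (normL eps t) ?q"
        using p k by (simp add: prime_imp_coprime_int coprime_commute coprime_power_right_iff)
      then have "coprime (normL eps t mod ?q) ?q"
        using q by (simp only: coprime_mod_left_iff less_irrefl)
      then show "coprime (normL eps t mod ?q) p"
        using k by (simp add: coprime_power_right_iff)
    qed (use q in auto)
  qed (rule finite_subset[of _ "{0..<?q}"], auto)
  finally show ?thesis unfolding tauL_def .
qed

lemma sum_psi0_Hk_inv_mod_mult: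
  fixes p X :: int
  assumes p: "prime p" and k: "k \<ge> 1" and c0: "c0 \<le> k"
  shows "(\<Sum>u\<in>{0..<p^k}. psi0 p k u * Hk eps p c0 k xi \<gamma> (inv_mod (p^k) u * X) 1)
       = psi0 p k X * (cnj \<gamma> * tauL eps p k xi)"
proof (cases "coprime X p")
  case False
  then have "p dvd X"
    using p prime_imp_coprime[of p X] by (auto simp: ac_simps)
  then have "p dvd inv_mod (p^k) u * X" for u
    by simp
  then show ?thesis using False by (simp add: Hk_eq_0_if_dvd psi0_def)
next
  case True
  let ?q = "p^k" and ?H = "\<lambda>m. Hk eps p c0 k xi \<gamma> m 1"
  have q: "?q > 0" using prime_gt_0_int[OF p] by simp
  have H_mod: "?H (x mod ?q) = ?H x" for x
    by (rule Hk_cong[OF k]) (simp add: cong_def)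
  have "(\<Sum>u\<in>{0..<?q}. psi0 p k u * ?H (inv_mod ?q u * X))
      = (\<Sum>u\<in>{0..<?q}. if coprime u ?q then ?H ((inv_mod ?q u * X) mod ?q) else 0)"
    using k by (intro sum.cong) (simp_all add: psi0_def H_mod)
  also have "\<dots> = (\<Sum>u\<in>{u\<in>{0..<?q}. coprime u ?q}. ?H ((inv_mod ?q u * X) mod ?q))"
    by (rule sum.inter_filter[symmetric]) simp
  also have "\<dots> = (\<Sum>m\<in>{m\<in>{0..<?q}. coprime m ?q}. ?H m)"
    using True k by (intro sum_units_inv_mod_mult_reindex q) simp
  also have "\<dots> = cnj \<gamma> * tauL eps p k xi"
    using sum_Hk_units[OF p k c0] k by simp
  finally show ?thesis using True by (simp add: psi0_def)
qed

lemma sum_swap_to_innermost: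
  "(\<Sum>u\<in>U. \<Sum>x\<in>X. \<Sum>y\<in>Y. \<Sum>z\<in>Z. f u x y z) = (\<Sum>x\<in>X. \<Sum>y\<in>Y. \<Sum>z\<in>Z. \<Sum>u\<in>U. f u x y z)"
  by (simp only: sum.swap[of _ U])

lemma Hhat_swap12: "Hhat eps p c0 k xi \<gamma> \<psi> a1 a2 a3 = Hhat eps p c0 k xi \<gamma> \<psi> a2 a1 a3"
  unfolding Hhat_def
  by (rule arg_cong[where f="(*) _"], rule sum.cong[OF refl], subst sum.swap) (simp add: ac_simps)

lemma Hhat_swap23: "Hhat eps p c0 k xi \<gamma> \<psi> a1 a2 a3 = Hhat eps p c0 k xi \<gamma> \<psi> a1 a3 a2"
  unfolding Hhat_def
  by (rule arg_cong[where f="(*) _"], rule sum.cong[OF refl], rule sum.cong[OF refl], subst sum.swap)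
     (simp add: ac_simps)

lemma Hhat_psi0_eq_0:
  fixes p a1 a2 a3 :: int
  assumes p: "prime p"
    and no_cancel: "\<And>y. \<not> p dvd y \<Longrightarrow> \<not> p^(k-1) dvd a1 * y - a1 * a2 * a3"
  shows "Hhat eps p c0 k xi \<gamma> (psi0 p k) a1 a2 a3 = 0"
proof -
  let ?q = "p^k" and ?A = "{0..<p^k}" and ?H = "\<lambda>m. Hk eps p c0 k xi \<gamma> m 1"
  let ?B = "a1 * a2 * a3"
  have k: "k \<ge> 1" using no_cancel[of 1] p by (cases k) (auto simp: not_prime_unit)
  have q: "?q > 0" using prime_gt_0_int[OF p] by simp
  have substitute: "(\<Sum>x1\<in>?A. \<Sum>x2\<in>?A. \<Sum>x3\<in>?A. psi0 p k u * ?H (inv_mod ?q u * x1 * x2 * x3)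
          * eadd ?q (a1 * x1 + a2 * x2 + a3 * x3 - u * a1 * a2 * a3))
      = (\<Sum>y\<in>?A. \<Sum>x2\<in>?A. \<Sum>x3\<in>?A. psi0 p k u * ?H (y * x2 * x3)
          * eadd ?q (u * (a1 * y - ?B) + (a2 * x2 + a3 * x3)))" for u
  proof (cases "coprime u p")
    case False
    then have "psi0 p k u = 0" by (simp add: psi0_def)
    then show ?thesis by (simp only: mult_zero_left sum.neutral_const)
  next
    case True
    then have u: "coprime u ?q" using k by simp
    have H_eq: "?H (inv_mod ?q u * ((u * y) mod ?q) * x2 * x3) = ?H (y * x2 * x3)" for y x2 x3
    proof (rule Hk_cong[OF k])
      have "[inv_mod ?q u * ((u * y) mod ?q) * x2 * x3 = inv_mod ?q u * (u * y) * x2 * x3] (mod ?q)"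
        by (intro cong_mult cong_refl) (simp add: cong_def mod_mult_right_eq)
      also have "inv_mod ?q u * (u * y) * x2 * x3 = (u * inv_mod ?q u) * (y * x2 * x3)"
        by (simp add: ac_simps)
      also have "[(u * inv_mod ?q u) * (y * x2 * x3) = 1 * (y * x2 * x3)] (mod ?q)"
        using cong_inv_mod[OF q u] by (intro cong_mult cong_refl)
      finally show "[inv_mod ?q u * ((u * y) mod ?q) * x2 * x3 = y * x2 * x3] (mod ?q)" by simp
    qed
    have e_eq: "eadd ?q (a1 * ((u * y) mod ?q) + a2 * x2 + a3 * x3 - u * a1 * a2 * a3)
        = eadd ?q (u * (a1 * y - ?B) + (a2 * x2 + a3 * x3))" for y x2 x3
    proof (rule eadd_cong)
      have "[a1 * ((u * y) mod ?q) = a1 * (u * y)] (mod ?q)"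
        by (simp add: cong_def mod_mult_right_eq)
      then have "[a1 * ((u * y) mod ?q) + a2 * x2 + a3 * x3 - u * a1 * a2 * a3
          = a1 * (u * y) + a2 * x2 + a3 * x3 - u * a1 * a2 * a3] (mod ?q)"
        by (intro cong_diff cong_add cong_refl)
      also have "a1 * (u * y) + a2 * x2 + a3 * x3 - u * a1 * a2 * a3
          = u * (a1 * y - ?B) + (a2 * x2 + a3 * x3)"
        by (simp add: algebra_simps)
      finally show "[a1 * ((u * y) mod ?q) + a2 * x2 + a3 * x3 - u * a1 * a2 * a3
          = u * (a1 * y - ?B) + (a2 * x2 + a3 * x3)] (mod ?q)" .
    qed
    show ?thesis
      by (rule trans[OF sum_mult_unit_reindex[OF q u]], rule sum.cong[OF refl]) (simp only: H_eq e_eq)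
  qed
  have summand_eq_0:
    "(\<Sum>u\<in>?A. psi0 p k u * ?H (y * x2 * x3) * eadd ?q (u * (a1 * y - ?B) + (a2 * x2 + a3 * x3)))
      = 0" for y x2 x3
  proof (cases "p dvd y")
    case True
    then show ?thesis by (simp add: Hk_eq_0_if_dvd)
  next
    case False
    have "(\<Sum>u\<in>?A. psi0 p k u * ?H (y * x2 * x3) * eadd ?q (u * (a1 * y - ?B) + (a2 * x2 + a3 * x3)))
        = ?H (y * x2 * x3) * eadd ?q (a2 * x2 + a3 * x3)
          * (\<Sum>u\<in>?A. psi0 p k u * eadd ?q (u * (a1 * y - ?B)))"
      by (simp add: eadd_add sum_distrib_left ac_simps)
    then show ?thesis using ramanujan_sum_prime_power_eq_0[OF p no_cancel[OF False]] by simp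
  qed
  show ?thesis
    unfolding Hhat_def cnj_psi0 substitute sum_swap_to_innermost summand_eq_0 by simp
qed

lemma Hhat_psi0_eq_0_if_not_dvd_first:
  fixes p a1 a2 a3 :: int
  assumes p: "prime p" and k: "k \<ge> 2" and not_dvd: "\<not> p dvd a1" and dvd: "p dvd a1 * a2 * a3"
  shows "Hhat eps p c0 k xi \<gamma> (psi0 p k) a1 a2 a3 = 0"
proof (rule Hhat_psi0_eq_0[OF p])
  fix y assume y: "\<not> p dvd y"
  show "\<not> p^(k-1) dvd a1 * y - a1 * a2 * a3"
  proof
    assume "p^(k-1) dvd a1 * y - a1 * a2 * a3"
    moreover have "p dvd p^(k-1)" using k by (simp add: dvd_power)
    ultimately have "p dvd (a1 * y - a1 * a2 * a3) + a1 * a2 * a3"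
      using dvd by (meson dvd_add dvd_trans)
    then show False using p not_dvd y by (simp add: prime_dvd_mult_iff)
  qed
qed

lemma Hhat_psi0_eq_0_if_dvd_last_two:
  fixes p a1 a2 a3 :: int
  assumes p: "prime p" and dvd2: "p dvd a2" and dvd3: "p dvd a3"
    and not_dvd: "\<not> p^k dvd a1 * a2 * a3"
  shows "Hhat eps p c0 k xi \<gamma> (psi0 p k) a1 a2 a3 = 0"
proof (rule Hhat_psi0_eq_0[OF p])
  fix y assume y: "\<not> p dvd y"
  show "\<not> p^(k-1) dvd a1 * y - a1 * a2 * a3"
  proof
    assume "p^(k-1) dvd a1 * y - a1 * a2 * a3"
    then have "p^(k-1) dvd a1 * (y - a2 * a3)" by (simp add: algebra_simps)
    moreover have "\<not> p dvd y - a2 * a3"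
      using y dvd2 dvd_add[of p "y - a2 * a3" "a2 * a3"] by auto
    then have "coprime (p^(k-1)) (y - a2 * a3)"
      using p by (simp add: prime_imp_coprime)
    ultimately have "p^(k-1) dvd a1" using coprime_dvd_mult_left_iff by blast
    then have "p^(k-1) * p * p dvd a1 * a2 * a3" using dvd2 dvd3 by (intro mult_dvd_mono)
    moreover have "p^k dvd p^(k-1) * p * p"
      using le_imp_power_dvd[of k "k - 1 + 2" p] by (simp add: power_add ac_simps)
    ultimately show False using not_dvd dvd_trans by blast
  qed
qed

lemma Hhat_psi0_eq_tauL_Ram0:
  fixes p a1 a2 a3 :: int
  assumes p: "prime p" and k: "k \<ge> 1" and c0: "c0 \<le> k" and dvd: "p^k dvd a1 * a2 * a3"
  shows "Hhat eps p c0 k xi \<gamma> (psi0 p k) a1 a2 a3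
       = cnj \<gamma> * inverse (of_int (p ^ (2 * k))) * tauL eps p k xi
           * Ram0 p k a1 * Ram0 p k a2 * Ram0 p k a3"
proof -
  let ?q = "p^k" and ?A = "{0..<p^k}" and ?C = "cnj \<gamma> * tauL eps p k xi"
  let ?r = "\<lambda>a x. psi0 p k x * eadd ?q (a * x)"
  have inner: "(\<Sum>u\<in>?A. psi0 p k u * Hk eps p c0 k xi \<gamma> (inv_mod ?q u * x1 * x2 * x3) 1
          * eadd ?q (a1 * x1 + a2 * x2 + a3 * x3 - u * a1 * a2 * a3))
      = ?C * (?r a1 x1 * (?r a2 x2 * ?r a3 x3))" for x1 x2 x3
  proof -
    have "eadd ?q (a1 * x1 + a2 * x2 + a3 * x3 - u * a1 * a2 * a3) = eadd ?q (a1 * x1 + a2 * x2 + a3 * x3)" for u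
      using dvd by (intro eadd_cong) (simp add: cong_iff_dvd_diff mult.assoc)
    then have "(\<Sum>u\<in>?A. psi0 p k u * Hk eps p c0 k xi \<gamma> (inv_mod ?q u * x1 * x2 * x3) 1
          * eadd ?q (a1 * x1 + a2 * x2 + a3 * x3 - u * a1 * a2 * a3))
        = (\<Sum>u\<in>?A. psi0 p k u * Hk eps p c0 k xi \<gamma> (inv_mod ?q u * (x1 * x2 * x3)) 1)
          * eadd ?q (a1 * x1 + a2 * x2 + a3 * x3)"
      by (simp add: sum_distrib_right mult.assoc)
    also have "\<dots> = psi0 p k (x1 * x2 * x3) * ?C * eadd ?q (a1 * x1 + a2 * x2 + a3 * x3)"
      by (simp only: sum_psi0_Hk_inv_mod_mult[OF p k c0])
    also have "\<dots> = ?C * (?r a1 x1 * (?r a2 x2 * ?r a3 x3))"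
      by (simp add: psi0_mult eadd_add ac_simps)
    finally show ?thesis .
  qed
  have "Hhat eps p c0 k xi \<gamma> (psi0 p k) a1 a2 a3
      = inverse (of_int (p ^ (2 * k))) * (\<Sum>x1\<in>?A. \<Sum>x2\<in>?A. \<Sum>x3\<in>?A. ?C * (?r a1 x1 * (?r a2 x2 * ?r a3 x3)))"
    unfolding Hhat_def cnj_psi0 sum_swap_to_innermost inner ..
  also have "\<dots> = inverse (of_int (p ^ (2 * k))) * (?C * (Ram0 p k a1 * (Ram0 p k a2 * Ram0 p k a3)))"
    unfolding Ram0_eq_sum_psi0 by (simp only: sum_distrib_right) (simp only: sum_distrib_left)
  finally show ?thesis by (simp only: ac_simps)
qed

theorem lemma5p12:
  fixes p eps a1 a2 a3 :: int and k :: nat and xi :: "int \<times> int \<Rightarrow> complex" and \<gamma> :: complex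
  assumes "prime p" and "odd p"
    and "\<not> QuadRes p eps"
    and "k \<ge> 2" and "k \<ge> 10 \<or> p \<ge> 10"
    and "norm \<gamma> = 1"
    and "admissible_xi eps p k xi"
    and "p dvd a1 * a2 * a3"
  shows "(\<not> p ^ k dvd a1 * a2 * a3 \<longrightarrow> Hhat eps p k k xi \<gamma> (psi0 p k) a1 a2 a3 = 0)
       \<and> (p ^ k dvd a1 * a2 * a3 \<longrightarrow>
            Hhat eps p k k xi \<gamma> (psi0 p k) a1 a2 a3
              = cnj \<gamma> * inverse (of_int (p ^ (2 * k))) * tauL eps p k xi
                  * Ram0 p k a1 * Ram0 p k a2 * Ram0 p k a3)"
proof (intro conjI impI)
  assume not_dvd: "\<not> p ^ k dvd a1 * a2 * a3"
  consider "\<not> p dvd a1" | "\<not> p dvd a2" | "\<not> p dvd a3" | "p dvd a2" "p dvd a3" by blast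
  then show "Hhat eps p k k xi \<gamma> (psi0 p k) a1 a2 a3 = 0"
  proof cases
    case 1
    then show ?thesis using Hhat_psi0_eq_0_if_not_dvd_first assms(1,4,8) by blast
  next
    case 2
    then have "Hhat eps p k k xi \<gamma> (psi0 p k) a2 a1 a3 = 0"
      using Hhat_psi0_eq_0_if_not_dvd_first assms(1,4,8) by (simp add: ac_simps)
    then show ?thesis using Hhat_swap12 by metis
  next
    case 3
    then have "Hhat eps p k k xi \<gamma> (psi0 p k) a3 a1 a2 = 0"
      using Hhat_psi0_eq_0_if_not_dvd_first assms(1,4,8) by (simp add: ac_simps)
    then show ?thesis using Hhat_swap12 Hhat_swap23 by metis
  next
    case 4
    then show ?thesis using Hhat_psi0_eq_0_if_dvd_last_two assms(1) not_dvd by blast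
  qed
next
  assume "p ^ k dvd a1 * a2 * a3"
  then show "Hhat eps p k k xi \<gamma> (psi0 p k) a1 a2 a3
      = cnj \<gamma> * inverse (of_int (p ^ (2 * k))) * tauL eps p k xi
          * Ram0 p k a1 * Ram0 p k a2 * Ram0 p k a3"
    using Hhat_psi0_eq_tauL_Ram0 assms(1,4) by simp
qed

end
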